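(* Let $(\Omega,\mu)$ be a measure space with $\mu$ a continuous measure (i.e., without point masses), and let $(u_k)_{k\geq 1}$ be a frame in $L^2_{\mathbb R}(\Omega,\mu)$. Then $$\sum_{k}(u_k^+(x))^2=\sum_k (u_k^-(x))^2=\infty\quad\text{for }\mu\text{-almost every }x\in\Omega.$$ In particular, there exist no positive frames (nor positive Riesz bases) in $L^2_{\mathbb R}(\Omega,\mu)$.
   Context: $L^2_{\mathbb R}(\Omega,\mu)$ is the Lebesgue space of real-valued square-integrable functions. A sequence $(u_k)_{k\ge1}$ in it is a frame if there exist constants $A>0$, $B>0$ with $A\|f\|^2\le\sum_{k\ge1}|(f,u_k)|^2\le B\|f\|^2$ for all $f\in L^2_{\mathbb R}(\Omega,\mu)$. For a real function $u$, $u^{\pm}(x)=\max(0,\pm u(x))$ denote its positive and negative parts. *)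

theory Defs
  imports "HOL-Analysis.Analysis"
begin

definition L2R :: "'a measure \<Rightarrow> ('a \<Rightarrow> real) set" where
  "L2R M = {f. f \<in> borel_measurable M \<and> integrable M (\<lambda>x. (f x)\<^sup>2)}"

definition L2_inner :: "'a measure \<Rightarrow> ('a \<Rightarrow> real) \<Rightarrow> ('a \<Rightarrow> real) \<Rightarrow> real" where
  "L2_inner M f g = (\<integral>x. f x * g x \<partial>M)"

definition L2_normsq :: "'a measure \<Rightarrow> ('a \<Rightarrow> real) \<Rightarrow> real" where
  "L2_normsq M f = (\<integral>x. (f x)\<^sup>2 \<partial>M)"

text \<open>Frame in L^2_R(M), indexed by nat (k = 0,1,2,... instead of k >= 1).\<close>
definition is_frame :: "'a measure \<Rightarrow> (nat \<Rightarrow> 'a \<Rightarrow> real) \<Rightarrow> bool" where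
  "is_frame M u \<longleftrightarrow> (\<forall>k. u k \<in> L2R M) \<and>
     (\<exists>A B. A > 0 \<and> B > 0 \<and> (\<forall>f \<in> L2R M.
        summable (\<lambda>k. \<bar>L2_inner M f (u k)\<bar>\<^sup>2) \<and>
        A * L2_normsq M f \<le> (\<Sum>k. \<bar>L2_inner M f (u k)\<bar>\<^sup>2) \<and>
        (\<Sum>k. \<bar>L2_inner M f (u k)\<bar>\<^sup>2) \<le> B * L2_normsq M f))"

text \<open>Continuous (atomless) measure: every set of positive measure contains a
  measurable subset of strictly smaller positive measure.\<close>
definition atomless :: "'a measure \<Rightarrow> bool" where
  "atomless M \<longleftrightarrow> (\<forall>A \<in> sets M. emeasure M A > 0 \<longrightarrow>
      (\<exists>B \<in> sets M. B \<subseteq> A \<and> 0 < emeasure M B \<and> emeasure M B < emeasure M A))"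

definition pos_part :: "('a \<Rightarrow> real) \<Rightarrow> 'a \<Rightarrow> real" where
  "pos_part u x = max 0 (u x)"

definition neg_part :: "('a \<Rightarrow> real) \<Rightarrow> 'a \<Rightarrow> real" where
  "neg_part u x = max 0 (- u x)"

end

(* Suppose sum_k (u_k^-)^2 <= C on a set F of finite positive measure. Writing |u_k| = u_k + 2 u_k^-,
   the upper frame bound for the indicator of F and Cauchy-Schwarz show that the local L^1 norms
   d_k = int_F |u_k| are square summable; choose K with sum_(k >= K) d_k^2 < A mu(F) / 2, where A is
   the lower frame bound. Since mu is atomless, F splits into S and F - S such that
   r = 1_(F - S) - 1_S is almost orthogonal to u_0, ..., u_(K-1). As |(r, u_k)| <= d_k for all k,
   sum_k (r, u_k)^2 < A mu(F) = A ||r||^2, contradicting the lower frame bound. Sigma-finiteness turns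
   this into the almost-everywhere statement, and passing to -u_k handles the positive parts. *)

theory Submission
  imports Defs
begin

section \<open>Atomless measures\<close>

lemma atomless_obtain_subset_le_half:
  assumes "atomless M" "A \<in> fmeasurable M" "0 < measure M A"
  obtains B where "B \<in> fmeasurable M" "B \<subseteq> A" "0 < measure M B" "measure M B \<le> measure M A / 2"
proof -
  have "0 < emeasure M A"
    using assms(2,3) by (simp add: emeasure_eq_measure2)
  then obtain C where C: "C \<in> sets M" "C \<subseteq> A" "0 < emeasure M C" "emeasure M C < emeasure M A"
    using assms(1) fmeasurableD[OF assms(2)] unfolding atomless_def by blast
  have "C \<in> fmeasurable M"
    using C assms(2) by (blast intro: fmeasurableI2)
  then have C_measure: "0 < measure M C" "measure M C < measure M A"
    using C assms(2) by (simp_all add: emeasure_eq_measure2 ennreal_less_iff)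
  have "A - C \<in> fmeasurable M"
    using assms(2) C(1) by (rule fmeasurable_Diff)
  moreover have "measure M (A - C) = measure M A - measure M C"
    using assms(2) C(1,2) by (rule measurable_measure_Diff)
  ultimately show thesis
    using that \<open>C \<in> fmeasurable M\<close> C(2) C_measure
    by (cases "measure M C \<le> measure M A / 2") auto
qed

lemma atomless_obtain_small_subset:
  assumes "atomless M" "A \<in> fmeasurable M" "0 < measure M A" "0 < e"
  obtains B where "B \<in> fmeasurable M" "B \<subseteq> A" "0 < measure M B" "measure M B \<le> e"
proof -
  have "\<exists>B\<in>fmeasurable M. B \<subseteq> A \<and> 0 < measure M B \<and> measure M B \<le> measure M A / 2 ^ n" for n
  proof (induction n)
    case 0
    then show ?case using assms(2,3) by auto
  next
    case (Suc n)
    then obtain B where B: "B \<in> fmeasurable M" "B \<subseteq> A" "0 < measure M B"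
      "measure M B \<le> measure M A / 2 ^ n" by blast
    obtain C where "C \<in> fmeasurable M" "C \<subseteq> B" "0 < measure M C" "measure M C \<le> measure M B / 2"
      using atomless_obtain_subset_le_half[OF assms(1) B(1,3)] .
    moreover have "measure M B / 2 \<le> measure M A / 2 ^ Suc n"
      using B(4) by (simp add: field_simps)
    ultimately show ?case
      using B(2) by (intro bexI[of _ C]) auto
  qed
  moreover obtain n :: nat where "measure M A / e < 2 ^ n"
    using real_arch_pow[of 2 "measure M A / e"] by auto
  then have "measure M A / 2 ^ n < e"
    using assms(4) by (simp add: field_simps)
  ultimately show thesis
    using that by (meson less_imp_le order_trans)
qed

text \<open>One step of an exhaustion: \<open>T'\<close> adds to \<open>T\<close> at least half of the largest piece
  that still fits below \<open>t\<close>.\<close>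

lemma obtain_greedy_extension:
  assumes "A \<in> fmeasurable M" "T \<in> sets M" "T \<subseteq> A" "measure M T \<le> t"
  obtains T' where "T' \<in> sets M" "T \<subseteq> T'" "T' \<subseteq> A" "measure M T' \<le> t"
    "\<And>B. B \<in> sets M \<Longrightarrow> B \<subseteq> A - T \<Longrightarrow> measure M T + measure M B \<le> t \<Longrightarrow>
       measure M B \<le> 2 * (measure M T' - measure M T)"
proof -
  define V where "V = {measure M B | B. B \<in> sets M \<and> B \<subseteq> A - T \<and> measure M T + measure M B \<le> t}"
  have "0 \<in> V"
    using assms(4) unfolding V_def by (auto intro!: exI[of _ "{}"])
  moreover have bdd: "bdd_above V"
    unfolding V_def by (rule bdd_aboveI[of _ t]) (auto intro: order_trans[rotated])
  ultimately obtain B0 where B0: "B0 \<in> sets M" "B0 \<subseteq> A - T" "measure M T + measure M B0 \<le> t"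
    "Sup V \<le> 2 * measure M B0"
  proof (cases "Sup V \<le> 0")
    case True
    then show thesis using that[of "{}"] assms(4) by auto
  next
    case False
    then obtain x where "x \<in> V" "Sup V / 2 < x"
      using less_cSupE[of "Sup V / 2" V] \<open>0 \<in> V\<close> by force
    then show thesis using that unfolding V_def by force
  qed
  have "T \<in> fmeasurable M" "B0 \<in> fmeasurable M"
    using assms B0 by (auto intro: fmeasurableI2)
  then have "measure M (T \<union> B0) = measure M T + measure M B0"
    using B0(2) by (intro measure_Union) (auto simp: fmeasurable_def)
  moreover have "measure M B \<le> Sup V"
    if "B \<in> sets M" "B \<subseteq> A - T" "measure M T + measure M B \<le> t" for B
    using that bdd unfolding V_def by (intro cSup_upper) auto
  ultimately show thesis
    using that[of "T \<union> B0"] assms(2,3) B0 by force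
qed

lemma obtain_greedy_sequence:
  assumes A: "A \<in> fmeasurable M" and t: "0 \<le> t"
  obtains S :: "nat \<Rightarrow> 'a set" where "\<And>n. S n \<in> sets M" "\<And>n. S n \<subseteq> A" "\<And>n. measure M (S n) \<le> t"
    "incseq S"
    "\<And>n B. B \<in> sets M \<Longrightarrow> B \<subseteq> A - S n \<Longrightarrow> measure M (S n) + measure M B \<le> t \<Longrightarrow>
       measure M B \<le> 2 * (measure M (S (Suc n)) - measure M (S n))"
proof -
  have "\<exists>S. \<forall>n. (S n \<in> sets M \<and> S n \<subseteq> A \<and> measure M (S n) \<le> t) \<and>
      S n \<subseteq> S (Suc n) \<and>
      (\<forall>B. B \<in> sets M \<longrightarrow> B \<subseteq> A - S n \<longrightarrow> measure M (S n) + measure M B \<le> t \<longrightarrow>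
         measure M B \<le> 2 * (measure M (S (Suc n)) - measure M (S n)))"
  proof (rule dependent_nat_choice)
    show "\<exists>T. T \<in> sets M \<and> T \<subseteq> A \<and> measure M T \<le> t"
      using t by (intro exI[of _ "{}"]) auto
  next
    fix T n assume "T \<in> sets M \<and> T \<subseteq> A \<and> measure M T \<le> t"
    then obtain T' where "T' \<in> sets M" "T \<subseteq> T'" "T' \<subseteq> A" "measure M T' \<le> t"
      "\<And>B. B \<in> sets M \<Longrightarrow> B \<subseteq> A - T \<Longrightarrow> measure M T + measure M B \<le> t \<Longrightarrow>
         measure M B \<le> 2 * (measure M T' - measure M T)"
      using obtain_greedy_extension[OF A] by metis
    then show "\<exists>T'. (T' \<in> sets M \<and> T' \<subseteq> A \<and> measure M T' \<le> t) \<and> T \<subseteq> T' \<and>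
      (\<forall>B. B \<in> sets M \<longrightarrow> B \<subseteq> A - T \<longrightarrow> measure M T + measure M B \<le> t \<longrightarrow>
         measure M B \<le> 2 * (measure M T' - measure M T))"
      by blast
  qed
  then show thesis
    using that by (metis incseq_SucI)
qed

lemma atomless_obtain_subset_measure:
  assumes atomless: "atomless M" and A: "A \<in> fmeasurable M" and t: "0 \<le> t" "t \<le> measure M A"
  obtains U where "U \<in> fmeasurable M" "U \<subseteq> A" "measure M U = t"
proof -
  obtain S where S: "\<And>n. S n \<in> sets M" "\<And>n. S n \<subseteq> A" "\<And>n. measure M (S n) \<le> t"
    and inc: "incseq S"
    and greedy: "\<And>n B. B \<in> sets M \<Longrightarrow> B \<subseteq> A - S n \<Longrightarrow> measure M (S n) + measure M B \<le> t \<Longrightarrow>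
       measure M B \<le> 2 * (measure M (S (Suc n)) - measure M (S n))"
    using obtain_greedy_sequence[OF A t(1)] by blast
  \<comment> \<open>If the limit \<open>U\<close> fell short of \<open>t\<close>, a small piece \<open>B\<close> of \<open>A - U\<close> would fit below \<open>t\<close>
    at every stage, so every step would have added at least half of \<open>B\<close>.\<close>
  define U where "U = (\<Union>n. S n)"
  have U: "U \<in> fmeasurable M" "U \<subseteq> A"
    using S(1,2) A unfolding U_def by (auto intro: fmeasurableI2)
  have lim: "(\<lambda>n. measure M (S n)) \<longlonglongrightarrow> measure M U"
    unfolding U_def using S(1) inc U(1) by (intro Lim_measure_incseq) (auto simp: U_def fmeasurable_def)
  then have "measure M U \<le> t"
    using S(3) by (intro LIMSEQ_le_const2) auto
  have "(\<lambda>n. measure M (S (Suc n)) - measure M (S n)) \<longlonglongrightarrow> 0"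
    using tendsto_diff[OF LIMSEQ_Suc[OF lim] lim] by simp
  then have steps_to_0: "(\<lambda>n. 2 * (measure M (S (Suc n)) - measure M (S n))) \<longlonglongrightarrow> 0"
    by (rule tendsto_mult_right_zero)
  have "\<not> measure M U < t"
  proof
    assume less: "measure M U < t"
    have "A - U \<in> fmeasurable M" "measure M (A - U) = measure M A - measure M U"
      using A U by (auto intro: fmeasurable_Diff measurable_measure_Diff)
    moreover have "0 < measure M (A - U)"
      using less t calculation(2) by linarith
    ultimately obtain B where B: "B \<in> fmeasurable M" "B \<subseteq> A - U" "0 < measure M B"
      "measure M B \<le> t - measure M U"
      using atomless_obtain_small_subset[OF atomless, of "A - U" "t - measure M U"] less by auto
    have "measure M B \<le> 2 * (measure M (S (Suc n)) - measure M (S n))" for n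
    proof (rule greedy)
      have "measure M (S n) \<le> measure M U"
        using S(1) U(1) by (intro measure_mono_fmeasurable) (auto simp: U_def)
      then show "measure M (S n) + measure M B \<le> t"
        using B(4) by linarith
    qed (use B(1,2) U_def in auto)
    then have "measure M B \<le> 0"
      using steps_to_0 by (intro LIMSEQ_le_const) auto
    then show False
      using B(3) by simp
  qed
  then show thesis
    using that U \<open>measure M U \<le> t\<close> by auto
qed

section \<open>Signed indicators\<close>

definition signed_indicator :: "'a set \<Rightarrow> 'a set \<Rightarrow> 'a \<Rightarrow> real" where
  "signed_indicator F S x = indicator F x - 2 * indicator S x"

lemma signed_indicator_measurable [measurable]:
  assumes [measurable]: "F \<in> sets M" "S \<in> sets M"
  shows "signed_indicator F S \<in> borel_measurable M"
  unfolding signed_indicator_def by measurable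

lemma signed_indicator_square:
  "S \<subseteq> F \<Longrightarrow> (signed_indicator F S x)\<^sup>2 = indicator F x"
  unfolding signed_indicator_def by (auto simp: indicator_def)

lemma abs_signed_indicator_mult:
  "S \<subseteq> F \<Longrightarrow> \<bar>signed_indicator F S x * y\<bar> = indicator F x * \<bar>y\<bar>"
  unfolding signed_indicator_def by (auto simp: indicator_def)

lemma signed_indicator_mult_indicator:
  "S \<subseteq> F \<Longrightarrow> signed_indicator F S x * (indicator F x * y) = signed_indicator F S x * y"
  unfolding signed_indicator_def by (auto simp: indicator_def)

lemma simple_function_restrict:
  assumes "finite I" "\<And>k. k \<in> I \<Longrightarrow> simple_function M (s k)"
  shows "simple_function M (\<lambda>x. restrict (\<lambda>k. s k x) I)"
  using assms
proof (induction I rule: finite_induct)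
  case (insert i I)
  have eq: "(\<lambda>x. restrict (\<lambda>k. s k x) (insert i I)) =
      (\<lambda>x. (\<lambda>(a, g). g(i := a)) (s i x, restrict (\<lambda>k. s k x) I))"
    by (auto simp: fun_eq_iff restrict_def)
  have "simple_function M (\<lambda>x. restrict (\<lambda>k. s k x) I)"
    using insert.IH insert.prems by blast
  then have "simple_function M (\<lambda>x. (s i x, restrict (\<lambda>k. s k x) I))"
    using insert.prems by (intro simple_function_Pair) auto
  then show ?case
    unfolding eq by (rule simple_function_compose1)
qed (simp add: restrict_def)

lemma fmeasurable_Int_vimage_simple_function:
  assumes "F \<in> fmeasurable M" "simple_function M h"
  shows "F \<inter> h -` {y} \<in> fmeasurable M"
proof -
  have "F \<inter> h -` {y} = F \<inter> (h -` {y} \<inter> space M)"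
    using fmeasurableD[OF assms(1)] sets.sets_into_space by blast
  then show ?thesis
    using assms simple_functionD(2) by (simp add: fmeasurable_Int_fmeasurable)
qed

lemma atomless_obtain_halving_subset:
  assumes atomless: "atomless M" and F: "F \<in> fmeasurable M" and h: "simple_function M h"
  obtains S where "S \<in> sets M" "S \<subseteq> F"
    "\<And>y. measure M (S \<inter> h -` {y}) = measure M (F \<inter> h -` {y}) / 2"
proof -
  have halves_exist: "\<forall>y. \<exists>H. H \<in> fmeasurable M \<and> H \<subseteq> F \<inter> h -` {y} \<and>
      measure M H = measure M (F \<inter> h -` {y}) / 2"
  proof
    fix y
    show "\<exists>H. H \<in> fmeasurable M \<and> H \<subseteq> F \<inter> h -` {y} \<and>
        measure M H = measure M (F \<inter> h -` {y}) / 2"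
      using fmeasurable_Int_vimage_simple_function[OF F h, of y]
      by (rule atomless_obtain_subset_measure[OF atomless, of _ "measure M (F \<inter> h -` {y}) / 2"])
        (simp_all, blast)
  qed
  obtain H where H: "\<And>y. H y \<in> fmeasurable M" "\<And>y. H y \<subseteq> F \<inter> h -` {y}"
    "\<And>y. measure M (H y) = measure M (F \<inter> h -` {y}) / 2"
    using choice[OF halves_exist] by blast
  define S where "S = (\<Union>y\<in>h ` space M. H y)"
  have H_empty: "H y = {}" if "y \<notin> h ` space M" for y
    using H(2) that fmeasurableD[OF F] sets.sets_into_space by blast
  have "S \<inter> h -` {y} = H y" for y
  proof (intro equalityI)
    show "S \<inter> h -` {y} \<subseteq> H y"
    proof
      fix x assume "x \<in> S \<inter> h -` {y}"
      then obtain z where "x \<in> H z" "h x = y"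
        unfolding S_def by blast
      moreover have "h x = z"
        using H(2) \<open>x \<in> H z\<close> by blast
      ultimately show "x \<in> H y"
        by simp
    qed
    show "H y \<subseteq> S \<inter> h -` {y}"
      using H(2) H_empty by (cases "y \<in> h ` space M") (auto simp: S_def)
  qed
  moreover have "S \<in> sets M"
    using simple_functionD(1)[OF h] H(1) unfolding S_def by (intro sets.finite_UN) auto
  moreover have "S \<subseteq> F"
    using H(2) by (auto simp: S_def)
  ultimately show thesis
    using that H(3) by auto
qed

lemma integral_signed_indicator_simple_eq_0:
  fixes \<phi> :: "'b \<Rightarrow> real"
  assumes h: "simple_function M h" and F: "F \<in> fmeasurable M" and S: "S \<in> sets M" "S \<subseteq> F"
    and halves: "\<And>y. measure M (S \<inter> h -` {y}) = measure M (F \<inter> h -` {y}) / 2"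
  shows "(\<integral>x. signed_indicator F S x * \<phi> (h x) \<partial>M) = 0"
proof -
  define L where "L y = F \<inter> h -` {y}" for y
  have L: "L y \<in> fmeasurable M" "S \<inter> L y \<in> fmeasurable M" for y
    using fmeasurable_Int_vimage_simple_function[OF F h] fmeasurable_Int_fmeasurable[of "L y" M S] S(1)
    by (simp_all add: L_def Int_commute)
  have pointwise: "signed_indicator F S x * \<phi> (h x) =
      (\<Sum>y\<in>h ` space M. \<phi> y * (indicator (L y) x - 2 * indicator (S \<inter> L y) x))"
    if "x \<in> space M" for x
  proof -
    have "\<phi> y * (indicator (L y) x - 2 * indicator (S \<inter> L y) x) =
        (if y = h x then signed_indicator F S x * \<phi> (h x) else 0)" for y
      using S(2) by (auto simp: L_def signed_indicator_def indicator_def)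
    then show ?thesis
      using that simple_functionD(1)[OF h] by simp
  qed
  have "(\<integral>x. signed_indicator F S x * \<phi> (h x) \<partial>M) =
      (\<integral>x. (\<Sum>y\<in>h ` space M. \<phi> y * (indicator (L y) x - 2 * indicator (S \<inter> L y) x)) \<partial>M)"
    by (intro Bochner_Integration.integral_cong refl pointwise)
  also have "\<dots> = (\<Sum>y\<in>h ` space M. \<integral>x. \<phi> y * (indicator (L y) x - 2 * indicator (S \<inter> L y) x) \<partial>M)"
    using L by (intro Bochner_Integration.integral_sum) (auto simp: fmeasurable_def)
  also have "\<dots> = (\<Sum>y\<in>h ` space M. \<phi> y * (measure M (L y) - 2 * measure M (S \<inter> L y)))"
  proof (intro sum.cong refl)
    fix y
    have "L y \<subseteq> space M" "S \<inter> L y \<subseteq> space M"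
      using L fmeasurableD sets.sets_into_space by blast+
    then show "(\<integral>x. \<phi> y * (indicator (L y) x - 2 * indicator (S \<inter> L y) x) \<partial>M) =
        \<phi> y * (measure M (L y) - 2 * measure M (S \<inter> L y))"
      using L by (simp add: fmeasurable_def Int_absorb2)
  qed
  also have "\<dots> = 0"
    unfolding L_def Int_assoc[symmetric] Int_absorb2[OF S(2)] halves by simp
  finally show ?thesis .
qed

lemma integrable_obtain_simple_approx:
  fixes g :: "'a \<Rightarrow> real"
  assumes g: "integrable M g" and e: "0 < e"
  obtains s where "simple_function M s" "integrable M s" "(\<integral>x. \<bar>g x - s x\<bar> \<partial>M) < e"
proof -
  obtain y where "has_bochner_integral M g y"
    using g by (auto simp: integrable.simps)
  then obtain s where s: "\<And>i. Bochner_Integration.simple_bochner_integrable M (s i)"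
    and lim: "(\<lambda>i. \<integral>\<^sup>+x. norm (g x - s i x) \<partial>M) \<longlonglongrightarrow> 0"
    by (cases rule: has_bochner_integral.cases) blast
  obtain i where i: "(\<integral>\<^sup>+x. norm (g x - s i x) \<partial>M) < ennreal e"
    using eventually_happens'[OF sequentially_bot order_tendstoD(2)[OF lim, of "ennreal e"]] e by auto
  have "integrable M (s i)"
    using has_bochner_integral_simple_bochner_integrable[OF s[of i]] by (rule integrable.intros)
  moreover have "ennreal (\<integral>x. \<bar>g x - s i x\<bar> \<partial>M) = (\<integral>\<^sup>+x. norm (g x - s i x) \<partial>M)"
    using g calculation by (subst nn_integral_eq_integral) auto
  then have "ennreal (\<integral>x. \<bar>g x - s i x\<bar> \<partial>M) < ennreal e"
    using i by simp
  then have "(\<integral>x. \<bar>g x - s i x\<bar> \<partial>M) < e"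
    by (simp add: ennreal_less_iff)
  ultimately show thesis
    using that[of "s i"] s[of i] by (auto simp: Bochner_Integration.simple_bochner_integrable.simps)
qed

lemma integrable_signed_indicator_mult:
  assumes "F \<in> sets M" "S \<in> sets M" "S \<subseteq> F" "integrable M f"
  shows "integrable M (\<lambda>x. signed_indicator F S x * f x)"
  using assms by (intro Bochner_Integration.integrable_bound[OF assms(4)])
    (auto simp: abs_signed_indicator_mult indicator_def)

lemma abs_integral_signed_indicator_le_L1_distance:
  assumes F: "F \<in> sets M" "S \<in> sets M" "S \<subseteq> F"
    and g: "integrable M (\<lambda>x. indicator F x * g x)" and s: "integrable M s"
    and orth: "(\<integral>x. signed_indicator F S x * s x \<partial>M) = 0"
  shows "\<bar>\<integral>x. signed_indicator F S x * g x \<partial>M\<bar> \<le> (\<integral>x. \<bar>indicator F x * g x - s x\<bar> \<partial>M)"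
proof -
  define r where "r = signed_indicator F S"
  have int: "integrable M (\<lambda>x. r x * (indicator F x * g x - s x))" "integrable M (\<lambda>x. r x * s x)"
    unfolding r_def using F g s by (auto intro!: integrable_signed_indicator_mult)
  have "(\<integral>x. r x * g x \<partial>M) = (\<integral>x. r x * (indicator F x * g x - s x) + r x * s x \<partial>M)"
    by (simp add: r_def right_diff_distrib signed_indicator_mult_indicator[OF F(3)])
  also have "\<dots> = (\<integral>x. r x * (indicator F x * g x - s x) \<partial>M)"
    using int orth by (simp add: r_def)
  finally have "\<bar>\<integral>x. r x * g x \<partial>M\<bar> \<le> (\<integral>x. \<bar>r x * (indicator F x * g x - s x)\<bar> \<partial>M)"
    by (simp add: integral_abs_bound)
  also have "\<dots> \<le> (\<integral>x. \<bar>indicator F x * g x - s x\<bar> \<partial>M)"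
  proof (rule integral_mono)
    show "integrable M (\<lambda>x. \<bar>r x * (indicator F x * g x - s x)\<bar>)"
      using int(1) by simp
    show "integrable M (\<lambda>x. \<bar>indicator F x * g x - s x\<bar>)"
      using g s by simp
    show "\<bar>r x * (indicator F x * g x - s x)\<bar> \<le> \<bar>indicator F x * g x - s x\<bar>" for x
      using F(3) by (simp add: r_def abs_signed_indicator_mult indicator_def)
  qed
  finally show ?thesis
    by (simp add: r_def)
qed

text \<open>Approximate each \<open>g k\<close> on \<open>F\<close> in \<open>L\<^sup>1\<close> by a simple function and halve every common
  level set of these finitely many simple functions: the resulting signed indicator is exactly
  orthogonal to all of them.\<close>

lemma atomless_obtain_nearly_orthogonal_signed_indicator:
  fixes g :: "'i \<Rightarrow> 'a \<Rightarrow> real"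
  assumes atomless: "atomless M" and F: "F \<in> fmeasurable M" and I: "finite I"
    and g: "\<And>k. k \<in> I \<Longrightarrow> integrable M (\<lambda>x. indicator F x * g k x)" and e: "0 < e"
  obtains S where "S \<in> sets M" "S \<subseteq> F"
    "\<And>k. k \<in> I \<Longrightarrow> \<bar>\<integral>x. signed_indicator F S x * g k x \<partial>M\<bar> \<le> e"
proof -
  have "\<forall>k\<in>I. \<exists>s. simple_function M s \<and> integrable M s \<and>
      (\<integral>x. \<bar>indicator F x * g k x - s x\<bar> \<partial>M) < e"
  proof
    fix k assume "k \<in> I"
    obtain s where "simple_function M s" "integrable M s"
      "(\<integral>x. \<bar>indicator F x * g k x - s x\<bar> \<partial>M) < e"
      using integrable_obtain_simple_approx[OF g[OF \<open>k \<in> I\<close>] e] .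
    then show "\<exists>s. simple_function M s \<and> integrable M s \<and>
        (\<integral>x. \<bar>indicator F x * g k x - s x\<bar> \<partial>M) < e"
      by blast
  qed
  then obtain s where "\<forall>k\<in>I. simple_function M (s k) \<and> integrable M (s k) \<and>
      (\<integral>x. \<bar>indicator F x * g k x - s k x\<bar> \<partial>M) < e"
    by (auto dest: bchoice)
  then have s: "\<And>k. k \<in> I \<Longrightarrow> simple_function M (s k)" "\<And>k. k \<in> I \<Longrightarrow> integrable M (s k)"
    "\<And>k. k \<in> I \<Longrightarrow> (\<integral>x. \<bar>indicator F x * g k x - s k x\<bar> \<partial>M) < e"
    by auto
  define h where "h x = restrict (\<lambda>k. s k x) I" for x
  have h: "simple_function M h"
    unfolding h_def using I s(1) by (rule simple_function_restrict)
  obtain S where S: "S \<in> sets M" "S \<subseteq> F"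
    "\<And>y. measure M (S \<inter> h -` {y}) = measure M (F \<inter> h -` {y}) / 2"
    using atomless_obtain_halving_subset[OF atomless F h] by blast
  have "\<bar>\<integral>x. signed_indicator F S x * g k x \<partial>M\<bar> \<le> e" if k: "k \<in> I" for k
  proof -
    have "(\<integral>x. signed_indicator F S x * s k x \<partial>M) = (\<integral>x. signed_indicator F S x * (\<lambda>v. v k) (h x) \<partial>M)"
      using k by (simp add: h_def)
    also have "\<dots> = 0"
      using h F S by (rule integral_signed_indicator_simple_eq_0)
    finally have "\<bar>\<integral>x. signed_indicator F S x * g k x \<partial>M\<bar> \<le> (\<integral>x. \<bar>indicator F x * g k x - s k x\<bar> \<partial>M)"
      using fmeasurableD[OF F] S(1,2) g[OF k] s(2)[OF k] by (intro abs_integral_signed_indicator_le_L1_distance)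
    then show ?thesis
      using s(3)[OF k] by simp
  qed
  then show thesis
    using that S(1,2) by blast
qed

section \<open>Square-integrable functions\<close>

lemma abs_mult_le_sum_squares: "\<bar>a * b\<bar> \<le> a\<^sup>2 + (b::real)\<^sup>2"
proof -
  have "0 \<le> (\<bar>a\<bar> - \<bar>b\<bar>)\<^sup>2"
    by simp
  then have "2 * \<bar>a * b\<bar> \<le> a\<^sup>2 + b\<^sup>2"
    by (simp add: power2_eq_square algebra_simps abs_mult abs_mult_self_eq)
  then show ?thesis
    by simp
qed

lemma L2R_integrable_mult:
  assumes "f \<in> L2R M" "g \<in> L2R M"
  shows "integrable M (\<lambda>x. f x * g x)"
proof (rule Bochner_Integration.integrable_bound)
  show "integrable M (\<lambda>x. (f x)\<^sup>2 + (g x)\<^sup>2)"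
    using assms by (simp add: L2R_def)
  show "(\<lambda>x. f x * g x) \<in> borel_measurable M"
    using assms by (auto simp: L2R_def intro: borel_measurable_times)
  show "AE x in M. norm (f x * g x) \<le> norm ((f x)\<^sup>2 + (g x)\<^sup>2)"
    by (intro AE_I2) (simp add: abs_mult_le_sum_squares)
qed

lemma L2R_bound:
  assumes "g \<in> L2R M" "f \<in> borel_measurable M" "\<And>x. x \<in> space M \<Longrightarrow> \<bar>f x\<bar> \<le> \<bar>g x\<bar>"
  shows "f \<in> L2R M"
proof -
  have "integrable M (\<lambda>x. (f x)\<^sup>2)"
  proof (rule Bochner_Integration.integrable_bound)
    show "integrable M (\<lambda>x. (g x)\<^sup>2)"
      using assms(1) by (simp add: L2R_def)
    show "AE x in M. norm ((f x)\<^sup>2) \<le> norm ((g x)\<^sup>2)"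
      using assms(3) by (intro AE_I2) (simp add: abs_le_square_iff)
  qed (use assms(2) in simp)
  then show ?thesis
    using assms(2) by (simp add: L2R_def)
qed

lemma indicator_square: "(indicator F x)\<^sup>2 = (indicator F x :: real)"
  by (simp add: indicator_def)

lemma indicator_L2R: "F \<in> fmeasurable M \<Longrightarrow> indicator F \<in> L2R M"
  unfolding L2R_def by (auto simp: indicator_square fmeasurable_def)

lemma L2_normsq_indicator: "F \<in> sets M \<Longrightarrow> L2_normsq M (indicator F) = measure M F"
  unfolding L2_normsq_def by (simp add: indicator_square Int_absorb2 sets.sets_into_space)

lemma L2_normsq_nonneg: "0 \<le> L2_normsq M f"
  unfolding L2_normsq_def by simp

lemma L2_inner_square_le:
  assumes f: "f \<in> L2R M" and g: "g \<in> L2R M"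
  shows "(L2_inner M f g)\<^sup>2 \<le> L2_normsq M f * L2_normsq M g"
proof (cases "L2_normsq M g = 0")
  case True
  then have "AE x in M. (g x)\<^sup>2 = 0"
    using g unfolding L2_normsq_def L2R_def by (subst integral_nonneg_eq_0_iff_AE[symmetric]) auto
  then have "L2_inner M f g = 0"
    unfolding L2_inner_def by (subst integral_cong_AE[where g = "\<lambda>_. 0"]) (use f g in \<open>auto simp: L2R_def\<close>)
  then show ?thesis
    using True by simp
next
  case False
  define t where "t = L2_inner M f g / L2_normsq M g"
  have "0 \<le> (\<integral>x. (f x - t * g x)\<^sup>2 \<partial>M)"
    by simp
  also have "\<dots> = (\<integral>x. (f x)\<^sup>2 - 2 * t * (f x * g x) + t\<^sup>2 * (g x)\<^sup>2 \<partial>M)"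
    by (simp add: power2_eq_square algebra_simps)
  also have "\<dots> = L2_normsq M f - 2 * t * L2_inner M f g + t\<^sup>2 * L2_normsq M g"
    using f g L2R_integrable_mult[OF f g] unfolding L2R_def L2_normsq_def L2_inner_def by simp
  also have "\<dots> = L2_normsq M f - (L2_inner M f g)\<^sup>2 / L2_normsq M g"
    using False by (simp add: t_def power2_eq_square field_simps)
  finally show ?thesis
    using False L2_normsq_nonneg[of M g] by (simp add: field_simps)
qed

lemma square_integral_indicator_le:
  assumes F: "F \<in> fmeasurable M" and g: "g \<in> L2R M"
  shows "(\<integral>x. indicator F x * g x \<partial>M)\<^sup>2 \<le> measure M F * (\<integral>x. indicator F x * (g x)\<^sup>2 \<partial>M)"
proof -
  have "(\<lambda>x. indicator F x * g x) \<in> L2R M"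
    using F g by (intro L2R_bound[OF g]) (auto simp: L2R_def indicator_def fmeasurable_def)
  then have "(L2_inner M (indicator F) (\<lambda>x. indicator F x * g x))\<^sup>2 \<le>
      L2_normsq M (indicator F) * L2_normsq M (\<lambda>x. indicator F x * g x)"
    using indicator_L2R[OF F] by (intro L2_inner_square_le)
  moreover have "(\<lambda>x. indicator F x * (indicator F x * g x)) = (\<lambda>x. indicator F x * g x)"
    "(\<lambda>x. (indicator F x * g x)\<^sup>2) = (\<lambda>x. indicator F x * (g x)\<^sup>2)"
    by (auto simp: indicator_def fun_eq_iff)
  ultimately show ?thesis
    unfolding L2_inner_def L2_normsq_def L2_normsq_indicator[OF fmeasurableD[OF F], unfolded L2_normsq_def]
    by simp
qed

lemma neg_part_measurable [measurable]:
  assumes [measurable]: "u \<in> borel_measurable M"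
  shows "neg_part u \<in> borel_measurable M"
  unfolding neg_part_def by measurable

lemma neg_part_L2R: "u \<in> L2R M \<Longrightarrow> neg_part u \<in> L2R M"
  by (rule L2R_bound) (auto simp: L2R_def neg_part_def)

lemma abs_eq_plus_twice_neg_part: "\<bar>u x\<bar> = u x + 2 * neg_part u x"
  by (simp add: neg_part_def)

lemma integral_indicator_abs_eq:
  assumes F: "F \<in> fmeasurable M" and g: "g \<in> L2R M"
  shows "(\<integral>x. indicator F x * \<bar>g x\<bar> \<partial>M) =
    L2_inner M (indicator F) g + 2 * (\<integral>x. indicator F x * neg_part g x \<partial>M)"
proof -
  have "(\<integral>x. indicator F x * \<bar>g x\<bar> \<partial>M) = (\<integral>x. indicator F x * g x + 2 * (indicator F x * neg_part g x) \<partial>M)"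
    unfolding abs_eq_plus_twice_neg_part[of g] by (simp add: algebra_simps)
  also have "\<dots> = L2_inner M (indicator F) g + 2 * (\<integral>x. indicator F x * neg_part g x \<partial>M)"
    using L2R_integrable_mult[OF indicator_L2R[OF F] g] L2R_integrable_mult[OF indicator_L2R[OF F] neg_part_L2R[OF g]]
    unfolding L2_inner_def by simp
  finally show ?thesis .
qed

lemma signed_indicator_L2R:
  assumes "F \<in> fmeasurable M" "S \<in> sets M" "S \<subseteq> F"
  shows "signed_indicator F S \<in> L2R M" "L2_normsq M (signed_indicator F S) = measure M F"
proof -
  have "(\<lambda>x. (signed_indicator F S x)\<^sup>2) = indicator F"
    using assms(3) by (simp add: signed_indicator_square fun_eq_iff)
  then show "signed_indicator F S \<in> L2R M" "L2_normsq M (signed_indicator F S) = measure M F"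
    using indicator_L2R[OF assms(1)] L2_normsq_indicator[of F M] assms
    by (auto simp: L2R_def L2_normsq_def fmeasurable_def)
qed

lemma abs_L2_inner_signed_indicator_le:
  assumes "F \<in> fmeasurable M" "S \<in> sets M" "S \<subseteq> F" "g \<in> L2R M"
  shows "\<bar>L2_inner M (signed_indicator F S) g\<bar> \<le> (\<integral>x. indicator F x * \<bar>g x\<bar> \<partial>M)"
proof -
  have "\<bar>L2_inner M (signed_indicator F S) g\<bar> \<le> (\<integral>x. \<bar>signed_indicator F S x * g x\<bar> \<partial>M)"
    unfolding L2_inner_def by (rule integral_abs_bound)
  also have "\<dots> = (\<integral>x. indicator F x * \<bar>g x\<bar> \<partial>M)"
    using assms(3) by (simp add: abs_signed_indicator_mult)
  finally show ?thesis .
qed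

section \<open>Frames\<close>

lemma summable_obtain_head_tail_bound:
  fixes D :: "nat \<Rightarrow> real"
  assumes D: "summable D" and c: "0 < c"
  obtains K e where "0 < e"
    "\<And>f. summable f \<Longrightarrow> (\<And>k. f k \<le> D k) \<Longrightarrow> (\<And>k. k < K \<Longrightarrow> f k \<le> e) \<Longrightarrow> (\<Sum>k. f k) < c"
proof -
  obtain K where "\<forall>n\<ge>K. norm (\<Sum>i. D (i + n)) < c / 2"
    using suminf_exist_split[OF _ D, of "c / 2"] c by auto
  then have K: "(\<Sum>i. D (i + K)) < c / 2"
    by auto
  define e where "e = c / (2 * (real K + 1))"
  have "0 < e" "real K * e < c / 2"
    using c by (simp_all add: e_def field_simps)
  show thesis
  proof (rule that[OF \<open>0 < e\<close>])
    fix f assume f: "summable f" "\<And>k. f k \<le> D k" "\<And>k. k < K \<Longrightarrow> f k \<le> e"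
    have "(\<Sum>k. f k) = (\<Sum>i. f (i + K)) + (\<Sum>i<K. f i)"
      by (rule suminf_split_initial_segment[OF f(1)])
    moreover have "(\<Sum>i. f (i + K)) \<le> (\<Sum>i. D (i + K))"
      using f(1,2) D by (intro suminf_le) (auto intro: summable_ignore_initial_segment)
    moreover have "(\<Sum>i<K. f i) \<le> real K * e"
      using sum_mono[of "{..<K}" f "\<lambda>_. e"] f(3) by simp
    ultimately show "(\<Sum>k. f k) < c"
      using K \<open>real K * e < c / 2\<close> by linarith
  qed
qed

lemma summable_integral_if_nn_integral_suminf_finite:
  fixes w :: "nat \<Rightarrow> 'a \<Rightarrow> real"
  assumes w: "\<And>k. integrable M (w k)" "\<And>k x. 0 \<le> w k x"
    and finite: "(\<integral>\<^sup>+x. (\<Sum>k. ennreal (w k x)) \<partial>M) < \<infinity>"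
  shows "summable (\<lambda>k. \<integral>x. w k x \<partial>M)"
proof (rule summable_suminf_not_top)
  have "(\<Sum>k. ennreal (\<integral>x. w k x \<partial>M)) = (\<Sum>k. \<integral>\<^sup>+x. ennreal (w k x) \<partial>M)"
    using w by (subst nn_integral_eq_integral) auto
  also have "\<dots> = (\<integral>\<^sup>+x. (\<Sum>k. ennreal (w k x)) \<partial>M)"
    using w(1) by (intro nn_integral_suminf[symmetric]) auto
  finally show "(\<Sum>k. ennreal (\<integral>x. w k x \<partial>M)) \<noteq> top"
    using finite by simp
qed (use w in simp)

lemma summable_integral_neg_part_square_on:
  assumes u: "\<And>k. u k \<in> L2R M" and F: "F \<in> fmeasurable M"
    and bounded: "\<And>x. x \<in> F \<Longrightarrow> (\<Sum>k. ennreal ((neg_part (u k) x)\<^sup>2)) \<le> ennreal C"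
  shows "summable (\<lambda>k. \<integral>x. indicator F x * (neg_part (u k) x)\<^sup>2 \<partial>M)"
proof (rule summable_integral_if_nn_integral_suminf_finite)
  show "integrable M (\<lambda>x. indicator F x * (neg_part (u k) x)\<^sup>2)" for k
    using neg_part_L2R[OF u] integrable_mult_indicator[of F M "\<lambda>x. (neg_part (u k) x)\<^sup>2"] F
    by (simp add: L2R_def)
  have "(\<integral>\<^sup>+x. (\<Sum>k. ennreal (indicator F x * (neg_part (u k) x)\<^sup>2)) \<partial>M) \<le>
      (\<integral>\<^sup>+x. ennreal C * indicator F x \<partial>M)"
    using bounded by (intro nn_integral_mono) (auto simp: indicator_def)
  also have "\<dots> = ennreal C * emeasure M F"
    using F by (simp add: nn_integral_cmult_indicator fmeasurable_def)
  also have "\<dots> < \<infinity>"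
    using F by (simp add: ennreal_mult_less_top fmeasurable_def)
  finally show "(\<integral>\<^sup>+x. (\<Sum>k. ennreal (indicator F x * (neg_part (u k) x)\<^sup>2)) \<partial>M) < \<infinity>" .
qed simp

lemma is_frameD_L2R: "is_frame M u \<Longrightarrow> u k \<in> L2R M"
  by (simp add: is_frame_def)

lemma is_frame_summable: "is_frame M u \<Longrightarrow> f \<in> L2R M \<Longrightarrow> summable (\<lambda>k. (L2_inner M f (u k))\<^sup>2)"
  unfolding is_frame_def by auto

lemma is_frame_obtain_lower_bound:
  assumes "is_frame M u"
  obtains A where "0 < A" "\<And>f. f \<in> L2R M \<Longrightarrow> A * L2_normsq M f \<le> (\<Sum>k. (L2_inner M f (u k))\<^sup>2)"
proof -
  obtain A where "0 < A" "\<forall>f\<in>L2R M. A * L2_normsq M f \<le> (\<Sum>k. \<bar>L2_inner M f (u k)\<bar>\<^sup>2)"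
    using assms unfolding is_frame_def by blast
  then show thesis
    using that by simp
qed

lemma frame_local_L1_norms_square_summable:
  assumes frame: "is_frame M u" and F: "F \<in> fmeasurable M"
    and bounded: "\<And>x. x \<in> F \<Longrightarrow> (\<Sum>k. ennreal ((neg_part (u k) x)\<^sup>2)) \<le> ennreal C"
  shows "summable (\<lambda>k. (\<integral>x. indicator F x * \<bar>u k x\<bar> \<partial>M)\<^sup>2)"
proof -
  have u: "u k \<in> L2R M" for k
    using frame by (rule is_frameD_L2R)
  define p where "p k = L2_inner M (indicator F) (u k)" for k
  define a where "a k = (\<integral>x. indicator F x * (neg_part (u k) x)\<^sup>2 \<partial>M)" for k
  define b where "b k = (\<integral>x. indicator F x * neg_part (u k) x \<partial>M)" for k
  have p: "summable (\<lambda>k. (p k)\<^sup>2)"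
    unfolding p_def using frame indicator_L2R[OF F] by (rule is_frame_summable)
  have a: "summable a"
    unfolding a_def using u F bounded by (rule summable_integral_neg_part_square_on)
  have bound: "norm ((\<integral>x. indicator F x * \<bar>u k x\<bar> \<partial>M)\<^sup>2) \<le> 2 * (p k)\<^sup>2 + 8 * (measure M F * a k)"
    for k
  proof -
    have "0 \<le> (p k - 2 * b k)\<^sup>2"
      by simp
    then have "(p k + 2 * b k)\<^sup>2 \<le> 2 * (p k)\<^sup>2 + 8 * (b k)\<^sup>2"
      by (simp add: power2_eq_square algebra_simps)
    moreover have "(b k)\<^sup>2 \<le> measure M F * a k"
      unfolding a_def b_def using F neg_part_L2R[OF u] by (rule square_integral_indicator_le)
    ultimately show ?thesis
      using integral_indicator_abs_eq[OF F u] by (simp add: p_def b_def)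
  qed
  have "summable (\<lambda>k. 2 * (p k)\<^sup>2 + 8 * (measure M F * a k))"
    using summable_add[OF summable_mult[OF p] summable_mult[OF summable_mult[OF a]]] .
  then show ?thesis
    using bound by (rule summable_comparison_test')
qed

lemma frame_neg_part_unbounded_on_positive_sets:
  assumes atomless: "atomless M" and frame: "is_frame M u"
    and F: "F \<in> fmeasurable M" and F_pos: "0 < measure M F"
  shows "\<not> (\<forall>x\<in>F. (\<Sum>k. ennreal ((neg_part (u k) x)\<^sup>2)) \<le> ennreal C)"
proof
  assume "\<forall>x\<in>F. (\<Sum>k. ennreal ((neg_part (u k) x)\<^sup>2)) \<le> ennreal C"
  then have d: "summable (\<lambda>k. (\<integral>x. indicator F x * \<bar>u k x\<bar> \<partial>M)\<^sup>2)"
    using frame F by (intro frame_local_L1_norms_square_summable) auto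
  obtain A where A: "0 < A" "\<And>f. f \<in> L2R M \<Longrightarrow> A * L2_normsq M f \<le> (\<Sum>k. (L2_inner M f (u k))\<^sup>2)"
    using is_frame_obtain_lower_bound[OF frame] by blast
  obtain K e where e: "0 < e" and small_sum: "\<And>f. summable f \<Longrightarrow>
      (\<And>k. f k \<le> (\<integral>x. indicator F x * \<bar>u k x\<bar> \<partial>M)\<^sup>2) \<Longrightarrow> (\<And>k. k < K \<Longrightarrow> f k \<le> e) \<Longrightarrow>
      (\<Sum>k. f k) < A * measure M F"
    using summable_obtain_head_tail_bound[OF d] A(1) F_pos by (metis mult_pos_pos)
  obtain S where S: "S \<in> sets M" "S \<subseteq> F"
    and nearly_orthogonal: "\<And>k. k \<in> {..<K} \<Longrightarrow> \<bar>\<integral>x. signed_indicator F S x * u k x \<partial>M\<bar> \<le> sqrt e"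
    using atomless_obtain_nearly_orthogonal_signed_indicator[OF atomless F, of "{..<K}" u "sqrt e"]
      L2R_integrable_mult[OF indicator_L2R[OF F] is_frameD_L2R[OF frame]] e
    by auto
  define r where "r = signed_indicator F S"
  have r: "r \<in> L2R M" "L2_normsq M r = measure M F"
    unfolding r_def using F S by (rule signed_indicator_L2R)+
  define f where "f k = (L2_inner M r (u k))\<^sup>2" for k
  have "summable f"
    unfolding f_def using frame r(1) by (rule is_frame_summable)
  moreover have "f k \<le> (\<integral>x. indicator F x * \<bar>u k x\<bar> \<partial>M)\<^sup>2" for k
    using power_mono[OF abs_L2_inner_signed_indicator_le[OF F S is_frameD_L2R[OF frame, of k]] abs_ge_zero, of 2]
    by (simp add: f_def r_def)
  moreover have "f k \<le> e" if "k < K" for k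
    using power_mono[OF nearly_orthogonal[of k] abs_ge_zero, of 2] that e
    by (simp add: f_def r_def L2_inner_def)
  ultimately have "(\<Sum>k. f k) < A * measure M F"
    by (rule small_sum)
  moreover have "A * measure M F \<le> (\<Sum>k. f k)"
    using A(2)[OF r(1)] r(2) by (simp add: f_def)
  ultimately show False
    by simp
qed

lemma (in sigma_finite_measure) AE_eq_infinity_if_unbounded_on_positive_sets:
  fixes \<Phi> :: "'a \<Rightarrow> ennreal"
  assumes [measurable]: "\<Phi> \<in> borel_measurable M"
    and unbounded: "\<And>F C. F \<in> fmeasurable M \<Longrightarrow> 0 < measure M F \<Longrightarrow> \<not> (\<forall>x\<in>F. \<Phi> x \<le> ennreal C)"
  shows "AE x in M. \<Phi> x = \<infinity>"
proof -
  obtain \<Omega> :: "nat \<Rightarrow> 'a set" where \<Omega>: "range \<Omega> \<subseteq> sets M" "(\<Union>i. \<Omega> i) = space M"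
    "\<And>i. emeasure M (\<Omega> i) \<noteq> \<infinity>"
    using sigma_finite by blast
  define G where "G i n = \<Omega> i \<inter> {x \<in> space M. \<Phi> x \<le> ennreal (real n)}" for i n
  have "G i n \<in> null_sets M" for i n
  proof -
    have "\<Omega> i \<in> fmeasurable M"
      using \<Omega> by (auto simp: fmeasurable_def less_top)
    moreover have "G i n \<in> sets M"
      using \<Omega>(1) unfolding G_def by (intro sets.Int) auto
    ultimately have "G i n \<in> fmeasurable M"
      using fmeasurableI2[of "\<Omega> i" M "G i n"] by (auto simp: G_def)
    moreover have "\<not> 0 < measure M (G i n)"
      using unbounded[OF \<open>G i n \<in> fmeasurable M\<close>, of "real n"] by (auto simp: G_def)
    then have "measure M (G i n) = 0"
      using measure_nonneg[of M "G i n"] by linarith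
    ultimately show ?thesis
      by (simp add: null_sets_def emeasure_eq_measure2 fmeasurableD)
  qed
  then have "(\<Union>i. \<Union>n. G i n) \<in> null_sets M"
    by (intro null_sets_UN)
  moreover have "{x \<in> space M. \<Phi> x \<noteq> \<infinity>} \<subseteq> (\<Union>i. \<Union>n. G i n)"
  proof
    fix x assume x: "x \<in> {x \<in> space M. \<Phi> x \<noteq> \<infinity>}"
    then obtain i where "x \<in> \<Omega> i"
      using \<Omega>(2) by blast
    moreover obtain n where "\<Phi> x < of_nat n"
      using x ennreal_Ex_less_of_nat[of "\<Phi> x"] by (auto simp: less_top)
    ultimately show "x \<in> (\<Union>i. \<Union>n. G i n)"
      using x by (auto simp: G_def ennreal_of_nat_eq_real_of_nat intro: less_imp_le)
  qed
  ultimately show ?thesis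
    by (rule AE_I')
qed

lemma is_frame_uminus: "is_frame M u \<Longrightarrow> is_frame M (\<lambda>k x. - u k x)"
proof -
  have "(\<lambda>x. - f x) \<in> L2R M" if "f \<in> L2R M" for f :: "'a \<Rightarrow> real"
    using that by (simp add: L2R_def)
  moreover have "L2_inner M f (\<lambda>x. - u k x) = - L2_inner M f (u k)" for f k
    by (simp add: L2_inner_def)
  ultimately show "is_frame M u \<Longrightarrow> is_frame M (\<lambda>k x. - u k x)"
    unfolding is_frame_def by simp
qed

lemma frame_neg_part_suminf_infinite:
  assumes "sigma_finite_measure M" "atomless M" "is_frame M u"
  shows "AE x in M. (\<Sum>k. ennreal ((neg_part (u k) x)\<^sup>2)) = \<infinity>"
proof (rule sigma_finite_measure.AE_eq_infinity_if_unbounded_on_positive_sets[OF assms(1)])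
  have [measurable]: "u k \<in> borel_measurable M" for k
    using is_frameD_L2R[OF assms(3)] by (simp add: L2R_def)
  show "(\<lambda>x. \<Sum>k. ennreal ((neg_part (u k) x)\<^sup>2)) \<in> borel_measurable M"
    by measurable
qed (rule frame_neg_part_unbounded_on_positive_sets[OF assms(2,3)])

lemma frame_not_AE_nonneg:
  assumes "sigma_finite_measure M" "atomless M" "is_frame M u" "emeasure M (space M) > 0"
  shows "\<not> (\<forall>k. AE x in M. u k x \<ge> 0)"
proof
  assume "\<forall>k. AE x in M. u k x \<ge> 0"
  then have "AE x in M. \<forall>k. 0 \<le> u k x"
    by (simp add: AE_all_countable)
  then have "AE x in M. \<forall>k. neg_part (u k) x = 0"
    by eventually_elim (simp add: neg_part_def)
  then have "AE x in M. False"
    using frame_neg_part_suminf_infinite[OF assms(1-3)] by eventually_elim simp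
  then show False
    using assms(4) by (simp add: eventually_False ae_filter_eq_bot_iff)
qed

theorem theorem1p1:
  fixes M :: "'a measure" and u :: "nat \<Rightarrow> 'a \<Rightarrow> real"
  assumes "sigma_finite_measure M"
    and "atomless M"
    and "is_frame M u"
  shows "(AE x in M. (\<Sum>k. ennreal ((pos_part (u k) x)\<^sup>2)) = \<infinity> \<and>
                     (\<Sum>k. ennreal ((neg_part (u k) x)\<^sup>2)) = \<infinity>)
         \<and> (emeasure M (space M) > 0 \<longrightarrow> \<not> (\<forall>k. AE x in M. u k x \<ge> 0))"
proof -
  have neg: "AE x in M. (\<Sum>k. ennreal ((neg_part (u k) x)\<^sup>2)) = \<infinity>"
    using assms by (rule frame_neg_part_suminf_infinite)
  have "pos_part (u k) = neg_part (\<lambda>x. - u k x)" for k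
    by (simp add: pos_part_def neg_part_def fun_eq_iff)
  then have pos: "AE x in M. (\<Sum>k. ennreal ((pos_part (u k) x)\<^sup>2)) = \<infinity>"
    using frame_neg_part_suminf_infinite[OF assms(1,2) is_frame_uminus[OF assms(3)]] by simp
  show ?thesis
    using eventually_conj[OF pos neg] frame_not_AE_nonneg[OF assms] by blast
qed

end
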